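(* Let $J$ be a real unital Jordan algebra of dimension $n\ge2$ with unit $e$, $\gamma$ a non-degenerate trace form on $J$ with $\gamma(e,e)=-1$, $\mathcal Y$ the connected component of $e$ in the set of invertible elements, and $\zeta$ the 1-form on $\mathcal Y$ given at $x$ by $\zeta(u)=-\gamma(u,x^{-1})$. Let $\Gamma=\{u\in J:\gamma(u,e)=0\}$ and let $\Pi\subset GL(J)$ be the group generated by the operators $P_u$, $u$ in a small neighbourhood of $e$. Then: $\zeta$ evaluates to $1$ on the position vector field $x$; $\zeta$ is closed and invariant under $\Pi$; its kernel $\Delta$ is an involutive $(n-1)$-dimensional distribution on $\mathcal Y$; $D\zeta$ is non-degenerate; $\zeta$ annihilates the vector field $X_w(x)=x\bullet w$ for every $w\in\Gamma$; and both $\Delta$ and $D\zeta$ are invariant under the map $x\mapsto x^{-1}$ on $\mathcal Y$. All these assertions except $\zeta(x)\equiv1$ remain valid without the condition $\gamma(e,e)=-1$.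
   Context: Real Jordan algebra: real vector space with commutative bilinear product $\bullet$ satisfying $x\bullet(x^2\bullet y)=x^2\bullet(x\bullet y)$; $L_xy=x\bullet y$; $P_x=2L_x^2-L_{x^2}$; $x$ is invertible iff $\det P_x\ne0$, with $x^{-1}=P_x^{-1}x$. Trace form: symmetric bilinear $\gamma$ with $\gamma(u\bullet v,w)=\gamma(u,v\bullet w)$. $D$ denotes the flat derivative on $J$. *)

theory Defs
  imports "HOL-Analysis.Analysis"
begin

definition Pop :: "(real^'n \<Rightarrow> real^'n \<Rightarrow> real^'n) \<Rightarrow> real^'n \<Rightarrow> real^'n \<Rightarrow> real^'n" where
  "Pop jm x = (\<lambda>y. 2 *\<^sub>R jm x (jm x y) - jm (jm x x) y)"

definition jinvertible :: "(real^'n \<Rightarrow> real^'n \<Rightarrow> real^'n) \<Rightarrow> real^'n \<Rightarrow> bool" where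
  "jinvertible jm x \<longleftrightarrow> det (matrix (Pop jm x)) \<noteq> 0"

definition jinverse :: "(real^'n \<Rightarrow> real^'n \<Rightarrow> real^'n) \<Rightarrow> real^'n \<Rightarrow> real^'n" where
  "jinverse jm x = inv (Pop jm x) x"

definition is_jordan_algebra :: "(real^'n \<Rightarrow> real^'n \<Rightarrow> real^'n) \<Rightarrow> bool" where
  "is_jordan_algebra jm \<longleftrightarrow> bilinear jm \<and> (\<forall>x y. jm x y = jm y x)
     \<and> (\<forall>x y. jm x (jm (jm x x) y) = jm (jm x x) (jm x y))"

definition is_trace_form :: "(real^'n \<Rightarrow> real^'n \<Rightarrow> real^'n) \<Rightarrow> (real^'n \<Rightarrow> real^'n \<Rightarrow> real) \<Rightarrow> bool" where
  "is_trace_form jm \<gamma> \<longleftrightarrow> bilinear \<gamma> \<and> (\<forall>u v. \<gamma> u v = \<gamma> v u)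
     \<and> (\<forall>u v w. \<gamma> (jm u v) w = \<gamma> u (jm v w))"

definition nondegenerate_form :: "('a::real_vector \<Rightarrow> 'a \<Rightarrow> real) \<Rightarrow> bool" where
  "nondegenerate_form B \<longleftrightarrow> (\<forall>u. (\<forall>v. B u v = 0) \<longrightarrow> u = 0)"

definition zeta :: "(real^'n \<Rightarrow> real^'n \<Rightarrow> real^'n) \<Rightarrow> (real^'n \<Rightarrow> real^'n \<Rightarrow> real) \<Rightarrow> real^'n \<Rightarrow> real^'n \<Rightarrow> real" where
  "zeta jm \<gamma> x u = - \<gamma> u (jinverse jm x)"

definition flatD :: "('a::real_normed_vector \<Rightarrow> 'a \<Rightarrow> real) \<Rightarrow> 'a \<Rightarrow> 'a \<Rightarrow> 'a \<Rightarrow> real" where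
  "flatD \<omega> x u v = frechet_derivative (\<lambda>y. \<omega> y v) (at x) u"

inductive_set gen_group :: "('a \<Rightarrow> 'a) set \<Rightarrow> ('a \<Rightarrow> 'a) set" for S where
  gen_id: "id \<in> gen_group S"
| gen_mult: "g \<in> gen_group S \<Longrightarrow> s \<in> S \<Longrightarrow> s \<circ> g \<in> gen_group S"
| gen_inv: "g \<in> gen_group S \<Longrightarrow> s \<in> S \<Longrightarrow> inv s \<circ> g \<in> gen_group S"

end

theory Submission
  imports Defs
begin

text \<open>Writing \<open>z = x\<inverse>\<close>, one has \<open>\<zeta>\<^sub>x(u) = -\<gamma>(u, z)\<close> and the derivative of the inverse is
  \<open>-P\<^sub>z\<close>; hence \<open>D\<zeta>\<^sub>x(u, v) = \<gamma>(v, P\<^sub>z u)\<close>, which is symmetric because \<open>P\<^sub>z\<close> is self-adjoint for the trace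
  form and non-degenerate because \<open>P\<^sub>z\<close> is invertible. Symmetry of \<open>D\<zeta>\<close> makes \<open>\<zeta>\<close> closed and its
  kernel involutive, the kernel is a hyperplane since \<open>z \<noteq> 0\<close>, and \<open>x \<bullet> z = e\<close> gives the values of \<open>\<zeta>\<close>
  on \<open>x\<close> and on \<open>x \<bullet> w\<close>. Inversion is an involution with derivative \<open>-P\<^sub>z\<close>, and \<open>P\<^sub>z P\<^sub>x = id\<close> turns
  this into invariance of the kernel and of \<open>D\<zeta>\<close>.

  For the invariance under \<open>\<Pi>\<close> every \<open>u\<close> near \<open>e\<close> is written as \<open>exp(L\<^sub>a) e\<close> (open mapping
  theorem). The flows \<open>exp(t L\<^sub>a)\<close> satisfy \<open>P\<^bsub>exp(t L\<^sub>a) x\<^esub> = exp(t L\<^sub>a) P\<^sub>x exp(t L\<^sub>a)\<close>, because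
  both sides solve the same linear differential equation, and they are self-adjoint for \<open>\<gamma>\<close>;
  so \<open>P\<^sub>u = exp(2 L\<^sub>a)\<close> preserves the unit component and \<open>\<zeta>\<close>, without appeal to the fundamental
  formula of Jordan algebras.\<close>

section \<open>Linearized Jordan identities and inverses\<close>

lemma double_eq_zero_iff_real_vector:
  fixes x :: "'a::real_vector"
  shows "x + x = 0 \<longleftrightarrow> x = 0"
  by (metis scaleR_2 scaleR_eq_0_iff zero_neq_numeral)

locale real_jordan =
  fixes jm :: "'a::real_vector \<Rightarrow> 'a \<Rightarrow> 'a"
  assumes mult_add_left: "jm (x + y) z = jm x z + jm y z"
    and mult_scaleR_left: "jm (r *\<^sub>R x) z = r *\<^sub>R jm x z"
    and mult_commute: "jm x y = jm y x"
    and jordan_identity: "jm x (jm (jm x x) y) = jm (jm x x) (jm x y)"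
begin

lemma mult_add_right: "jm z (x + y) = jm z x + jm z y"
  using mult_add_left mult_commute by metis

lemma mult_scaleR_right: "jm z (r *\<^sub>R x) = r *\<^sub>R jm z x"
  using mult_scaleR_left mult_commute by metis

lemma mult_minus_left: "jm (- x) z = - jm x z"
  using mult_scaleR_left[of "-1" x z] by simp

lemma mult_minus_right: "jm z (- x) = - jm z x"
  using mult_scaleR_right[of z "-1" x] by simp

lemma mult_diff_left: "jm (x - y) z = jm x z - jm y z"
  using mult_add_left[of x "-y"] mult_minus_left by simp

lemma mult_diff_right: "jm z (x - y) = jm z x - jm z y"
  using mult_add_right[of z x "-y"] mult_minus_right by simp

lemma mult_zero_left: "jm 0 z = 0"
  using mult_scaleR_left[of 0 x z] by simp

lemma mult_zero_right: "jm z 0 = 0"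
  using mult_scaleR_right[of z 0 x] by simp

lemmas mult_linear = mult_add_left mult_add_right mult_diff_left mult_diff_right
  mult_minus_left mult_minus_right mult_scaleR_left mult_scaleR_right mult_zero_left mult_zero_right

lemma linearized_jordan_identity:
  "jm a (jm (jm y y) w) + 2 *\<^sub>R jm y (jm (jm a y) w)
     = jm (jm y y) (jm a w) + 2 *\<^sub>R jm (jm a y) (jm y w)"
proof -
  define T where "T x = jm x (jm (jm x x) w) - jm (jm x x) (jm x w)" for x
  define C where "C = jm a (jm (jm y y) w) + jm y (jm (jm a y) w) + jm y (jm (jm a y) w)
    - jm (jm y y) (jm a w) - jm (jm a y) (jm y w) - jm (jm a y) (jm y w)"
  have "T (y + a) - T (y - a) = C + C + T a + T a"
    unfolding T_def C_def by (simp add: mult_linear mult_commute[of y a])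
  moreover have "T x = 0" for x
    unfolding T_def by (simp add: jordan_identity)
  ultimately have "C = 0"
    using double_eq_zero_iff_real_vector by auto
  then show ?thesis
    unfolding C_def by (simp add: scaleR_2 algebra_simps)
qed

lemma fully_linearized_jordan_identity:
  "jm (jm (jm a b) c) w = jm (jm a b) (jm c w) + jm (jm c a) (jm b w) + jm (jm c b) (jm a w)
     - jm a (jm c (jm b w)) - jm b (jm c (jm a w))"
proof -
  define D where "D y = jm a (jm (jm y y) c) + 2 *\<^sub>R jm y (jm (jm a y) c)
    - jm (jm y y) (jm a c) - 2 *\<^sub>R jm (jm a y) (jm y c)" for y
  define M where "M = jm w (jm (jm a b) c) - jm (jm a b) (jm w c)
    + jm a (jm (jm b w) c) - jm (jm b w) (jm a c)
    + jm b (jm (jm a w) c) - jm (jm a w) (jm b c)"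
  have "D (b + w) - D b - D w = M + M"
    unfolding D_def M_def
    by (simp add: mult_linear mult_commute[of b a] mult_commute[of w a] mult_commute[of w b]
        scaleR_2 algebra_simps)
  moreover have "D y = 0" for y
    unfolding D_def using linearized_jordan_identity[of a y c] by simp
  ultimately have "M = 0"
    using double_eq_zero_iff_real_vector by auto
  moreover have "jm w (jm (jm a b) c) = jm (jm (jm a b) c) w" "jm (jm a b) (jm w c) = jm (jm a b) (jm c w)"
    "jm a (jm (jm b w) c) = jm a (jm c (jm b w))" "jm (jm b w) (jm a c) = jm (jm c a) (jm b w)"
    "jm b (jm (jm a w) c) = jm b (jm c (jm a w))" "jm (jm a w) (jm b c) = jm (jm c b) (jm a w)"
    by (metis mult_commute)+
  ultimately show ?thesis
    unfolding M_def by (simp add: algebra_simps)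
qed

definition P :: "'a \<Rightarrow> 'a \<Rightarrow> 'a" where
  "P x v = 2 *\<^sub>R jm x (jm x v) - jm (jm x x) v"

definition Pbil :: "'a \<Rightarrow> 'a \<Rightarrow> 'a \<Rightarrow> 'a" where
  "Pbil a b v = jm a (jm b v) + jm b (jm a v) - jm (jm a b) v"

lemma P_eq_Pbil: "P x v = Pbil x x v"
  unfolding P_def Pbil_def by (simp add: scaleR_2)

lemma P_add: "P x (u + v) = P x u + P x v"
  and P_diff: "P x (u - v) = P x u - P x v"
  and P_minus: "P x (- u) = - P x u"
  and P_scaleR: "P x (r *\<^sub>R u) = r *\<^sub>R P x u"
  and P_zero: "P x 0 = 0"
  unfolding P_def by (simp_all add: mult_linear algebra_simps)

lemma P_add_point: "P (x + h) v = P x v + 2 *\<^sub>R Pbil x h v + P h v"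
  unfolding P_eq_Pbil Pbil_def by (simp add: mult_linear mult_commute[of h x] scaleR_2 algebra_simps)

lemma P_mult_commute: "P x (jm x w) = jm x (P x w)"
  unfolding P_def by (simp add: mult_linear jordan_identity)

lemma P_mult_sq_commute: "P x (jm (jm x x) w) = jm (jm x x) (P x w)"
  unfolding P_def by (simp add: mult_linear jordan_identity)

text \<open>The derivative of \<open>P\<close> at \<open>y\<close> in the direction \<open>a \<bullet> y\<close> is \<open>L\<^sub>a P\<^sub>y + P\<^sub>y L\<^sub>a\<close>.\<close>

lemma Pbil_mult_self:
  "2 *\<^sub>R Pbil y (jm a y) v = jm a (P y v) + P y (jm a v)"
proof -
  have "jm (jm y (jm a y)) v = jm (jm (jm a y) y) v"
    by (metis mult_commute)
  also have "\<dots> = 2 *\<^sub>R jm (jm a y) (jm y v) + jm (jm y y) (jm a v)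
     - jm a (jm y (jm y v)) - jm y (jm y (jm a v))"
    using fully_linearized_jordan_identity[of a y y v] by (simp add: mult_commute[of y a] scaleR_2)
  finally have yay: "jm (jm y (jm a y)) v = \<dots>" .
  have ayy: "jm a (jm (jm y y) v)
      = jm (jm y y) (jm a v) + 2 *\<^sub>R jm (jm a y) (jm y v) - 2 *\<^sub>R jm y (jm (jm a y) v)"
    using linearized_jordan_identity[of a y v] by (simp add: algebra_simps)
  show ?thesis
    unfolding P_def Pbil_def mult_diff_right mult_scaleR_right yay ayy
    by (simp add: scaleR_2 algebra_simps)
qed

end

locale real_unital_jordan = real_jordan +
  fixes e assumes unit_mult: "jm e x = x"
begin

lemma mult_unit: "jm x e = x"
  using unit_mult mult_commute by metis

lemma P_unit: "P e v = v"
  unfolding P_def by (simp add: unit_mult scaleR_2)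

lemma P_apply_unit: "P x e = jm x x"
  unfolding P_def by (simp add: mult_unit scaleR_2)

context
  fixes x z
  assumes P_inj: "inj (P x)" and P_z: "P x z = x"
begin

lemma mult_inverse: "jm x z = e"
  by (rule injD[OF P_inj]) (simp add: P_mult_commute P_z P_apply_unit)

lemma sq_mult_inverse: "jm (jm x x) z = x"
  by (rule injD[OF P_inj]) (simp add: P_mult_sq_commute P_z, simp add: P_def mult_commute[of x "jm x x"] scaleR_2)

lemma inverse_mult_sq_commute: "jm z (jm (jm x x) w) = jm (jm x x) (jm z w)"
  using linearized_jordan_identity[of z x w] by (simp add: mult_commute[of z x] mult_inverse unit_mult)

lemma mult_inverse_commute: "jm x (jm z w) = jm z (jm x w)"
proof -
  define C where "C w = jm x (jm z w) - jm z (jm x w)" for w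
  have C_diff: "C (u - v) = C u - C v" and C_double: "C (2 *\<^sub>R u) = 2 *\<^sub>R C u" for u v
    unfolding C_def by (simp_all add: mult_linear algebra_simps)
  have fl1: "jm x (jm x (jm z w)) + jm z (jm x (jm x w)) - jm (jm x x) (jm z w) = jm x w" for w
    using fully_linearized_jordan_identity[of x z x w]
    by (simp add: mult_inverse unit_mult algebra_simps scaleR_2)
  have fl2: "2 *\<^sub>R jm x (jm z (jm x w)) = jm (jm x x) (jm z w) + jm x w" for w
    using fully_linearized_jordan_identity[of x x z w]
    by (simp add: mult_inverse sq_mult_inverse mult_commute[of z x] unit_mult algebra_simps scaleR_2)
  have C_mult: "jm x (C w) = C (jm x w)" for w
    using fl1[of w] fl2[of w] unfolding C_def by (simp add: mult_linear algebra_simps scaleR_2)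
  have C_mult_sq: "jm (jm x x) (C w) = C (jm (jm x x) w)" for w
    unfolding C_def by (simp add: mult_linear inverse_mult_sq_commute jordan_identity)
  have P_C_commute: "C (P x w) = P x (C w)" for w
    unfolding P_def by (simp add: C_diff C_double C_mult C_mult_sq)
  have P_comp: "P x (jm z w) + jm z (P x w) = 2 *\<^sub>R jm x w" for w
    using fl1[of w] inverse_mult_sq_commute[of w] unfolding P_def by (simp add: mult_linear algebra_simps scaleR_2)
  \<comment> \<open>\<open>C = [L\<^sub>x, L\<^sub>z]\<close> both commutes and anticommutes with the injective \<open>P\<^sub>x\<close>.\<close>
  have "P x (C w) + C (P x w) = 0"
  proof -
    have "jm x (P x (jm z w) + jm z (P x w)) = jm x (2 *\<^sub>R jm x w)" by (simp add: P_comp)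
    with P_comp[of "jm x w"] show ?thesis
      unfolding C_def by (simp add: mult_linear P_diff P_mult_commute[symmetric] algebra_simps)
  qed
  with P_C_commute have "P x (C w) = 0"
    by (metis double_eq_zero_iff_real_vector)
  then have "C w = 0"
    using injD[OF P_inj] P_zero by metis
  then show ?thesis unfolding C_def by simp
qed

lemma P_inverse_left: "P z (P x w) = w"
proof -
  have sq_inv: "jm (jm z z) (jm x w) = 2 *\<^sub>R jm z (jm z (jm x w)) - jm z w" for w
    using fully_linearized_jordan_identity[of z x z w]
    by (simp add: mult_inverse mult_commute[of z x] unit_mult mult_inverse_commute algebra_simps scaleR_2)
  have "jm (jm z z) (jm x x) = e"
    using sq_inv[of x] by (simp add: mult_commute[of z "jm x x"] sq_mult_inverse mult_commute[of z x] mult_inverse scaleR_2)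
  then have unit_expansion: "w = jm (jm z z) (jm (jm x x) w) + 2 *\<^sub>R jm x (jm z w) - 2 *\<^sub>R jm z (jm z (jm (jm x x) w))"
    using fully_linearized_jordan_identity[of z z "jm x x" w]
    by (simp add: sq_mult_inverse unit_mult inverse_mult_sq_commute[symmetric] algebra_simps scaleR_2)
  have "P z (P x w) = - 2 *\<^sub>R jm z (jm z (jm (jm x x) w)) + 2 *\<^sub>R jm z (jm x w) + jm (jm z z) (jm (jm x x) w)"
    unfolding P_def by (simp add: mult_linear sq_inv algebra_simps scaleR_2)
  also have "\<dots> = w"
    using unit_expansion by (simp add: mult_inverse_commute algebra_simps)
  finally show ?thesis .
qed

end

end

section \<open>The Banach algebra of operators and its exponential\<close>

text \<open>\<open>blinfun\<close> has no multiplication instance; this copy of it, with composition as product,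
  makes \<open>exp\<close> of an operator available.\<close>

typedef (overloaded) 'a endo = "UNIV :: ('a::euclidean_space \<Rightarrow>\<^sub>L 'a) set"
  by simp

setup_lifting type_definition_endo

instantiation endo :: (euclidean_space) real_normed_vector
begin
lift_definition norm_endo :: "'a endo \<Rightarrow> real" is norm .
lift_definition minus_endo :: "'a endo \<Rightarrow> 'a endo \<Rightarrow> 'a endo" is "(-)" .
lift_definition plus_endo :: "'a endo \<Rightarrow> 'a endo \<Rightarrow> 'a endo" is "(+)" .
lift_definition uminus_endo :: "'a endo \<Rightarrow> 'a endo" is uminus .
lift_definition zero_endo :: "'a endo" is 0 .
lift_definition scaleR_endo :: "real \<Rightarrow> 'a endo \<Rightarrow> 'a endo" is scaleR .
definition dist_endo :: "'a endo \<Rightarrow> 'a endo \<Rightarrow> real" where "dist_endo a b = norm (a - b)"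
definition uniformity_endo :: "('a endo \<times> 'a endo) filter" where
  "uniformity_endo = (INF e\<in>{0 <..}. principal {(x, y). dist x y < e})"
definition open_endo :: "'a endo set \<Rightarrow> bool" where
  "open_endo S = (\<forall>x\<in>S. \<forall>\<^sub>F (x', y) in uniformity. x' = x \<longrightarrow> y \<in> S)"
definition sgn_endo :: "'a endo \<Rightarrow> 'a endo" where "sgn_endo x = scaleR (inverse (norm x)) x"
instance
  by standard (unfold dist_endo_def open_endo_def sgn_endo_def uniformity_endo_def,
    (rule refl | (transfer, force simp: norm_triangle_ineq algebra_simps))+)
end

instantiation endo :: (euclidean_space) real_normed_algebra_1
begin
lift_definition times_endo :: "'a endo \<Rightarrow> 'a endo \<Rightarrow> 'a endo" is blinfun_compose .
lift_definition one_endo :: "'a endo" is id_blinfun .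
instance
proof
  show "(0::'a endo) \<noteq> 1"
  proof transfer
    obtain b :: 'a where "b \<in> Basis" using nonempty_Basis by blast
    then have "blinfun_apply (0::'a \<Rightarrow>\<^sub>L 'a) b \<noteq> blinfun_apply id_blinfun b"
      using nonzero_Basis by auto
    then show "(0::'a \<Rightarrow>\<^sub>L 'a) \<noteq> id_blinfun" by metis
  qed
qed (transfer; auto intro: blinfun_eqI simp: blinfun.bilinear_simps norm_blinfun_compose)+
end

instance endo :: (euclidean_space) banach
proof
  fix X :: "nat \<Rightarrow> 'a endo"
  assume "Cauchy X"
  then have "Cauchy (\<lambda>n. Rep_endo (X n))"
    unfolding Cauchy_def dist_norm by (simp add: minus_endo.rep_eq norm_endo.rep_eq)
  then obtain L where "(\<lambda>n. Rep_endo (X n)) \<longlonglongrightarrow> L"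
    using convergent_eq_Cauchy by blast
  then have "X \<longlonglongrightarrow> Abs_endo L"
    unfolding tendsto_iff dist_norm by (simp add: minus_endo.rep_eq norm_endo.rep_eq Abs_endo_inverse)
  then show "convergent X" by (auto simp: convergent_def)
qed

lift_definition apply_endo :: "'a::euclidean_space endo \<Rightarrow> 'a \<Rightarrow> 'a" is blinfun_apply .

definition endo :: "('a::euclidean_space \<Rightarrow> 'a) \<Rightarrow> 'a endo" where
  "endo f = Abs_endo (Blinfun f)"

lemma apply_endo_endo: "bounded_linear f \<Longrightarrow> apply_endo (endo f) = f"
  unfolding endo_def by (simp add: apply_endo.rep_eq Abs_endo_inverse bounded_linear_Blinfun_apply)

lemma apply_endo_eqI: "(\<And>v. apply_endo A v = apply_endo B v) \<Longrightarrow> A = B"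
  by transfer (rule blinfun_eqI)

lemma apply_endo_times: "apply_endo (A * B) v = apply_endo A (apply_endo B v)"
  by transfer simp

lemma apply_endo_one [simp]: "apply_endo 1 v = v"
  by transfer simp

lemma apply_endo_add: "apply_endo (A + B) v = apply_endo A v + apply_endo B v"
  and apply_endo_scaleR: "apply_endo (r *\<^sub>R A) v = r *\<^sub>R apply_endo A v"
  by (transfer; simp add: blinfun.bilinear_simps)+

lemma bounded_bilinear_apply_endo: "bounded_bilinear apply_endo"
  by (rule bounded_bilinear.intro; transfer)
    (auto simp: blinfun.bilinear_simps norm_blinfun intro!: exI[of _ 1])

lemma norm_exp_remainder_le:
  fixes X :: "'a::{real_normed_algebra_1,banach}"
  shows "norm (exp X - 1 - X) \<le> norm X * norm X * exp (norm X)"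
proof -
  define f where "f n = inverse (fact (n + 2)) *\<^sub>R (X ^ (n + 2))" for n
  define g where "g n = norm X * norm X * (norm X ^ n / fact n)" for n
  have fg: "norm (f n) \<le> g n" for n
  proof -
    have "norm (f n) = norm (X ^ (n+2)) / fact (n+2)"
      unfolding f_def by (simp add: divide_inverse mult.commute)
    also have "\<dots> \<le> norm X ^ (n+2) / fact n"
      by (intro frac_le norm_power_ineq fact_mono) auto
    finally show ?thesis unfolding g_def by (simp add: power_add power2_eq_square field_simps)
  qed
  have gs: "g sums (norm X * norm X * exp (norm X))"
    unfolding g_def using exp_converges[of "norm X"] by (intro sums_mult) (simp add: divide_inverse mult.commute)
  have fs: "summable (\<lambda>n. norm (f n))"
    by (rule summable_comparison_test[of _ g]) (use fg gs in \<open>auto simp: sums_summable\<close>)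
  have "norm (exp X - 1 - X) = norm (suminf f)"
    unfolding f_def using exp_first_two_terms[of X] by simp
  also have "\<dots> \<le> suminf g"
    using summable_norm[OF fs] suminf_le[OF fg fs sums_summable[OF gs]] by linarith
  also have "\<dots> = norm X * norm X * exp (norm X)"
    using gs sums_unique by metis
  finally show ?thesis .
qed

lemma has_derivative_quadratic_remainder:
  fixes f :: "'a::real_normed_vector \<Rightarrow> 'b::real_normed_vector"
  assumes "bounded_linear f'" and "d > 0"
    and remainder: "\<And>y. norm (y - x) < d \<Longrightarrow> norm (f y - f x - f' (y - x)) \<le> C * (norm (y - x))\<^sup>2"
  shows "(f has_derivative f') (at x)"
proof (rule has_derivativeI_sandwich[OF \<open>d > 0\<close> \<open>bounded_linear f'\<close>])
  fix y assume "y \<noteq> x" "dist y x < d"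
  then show "norm (f y - f x - f' (y - x)) / norm (y - x) \<le> C * norm (y - x)"
    using remainder[of y] by (simp add: dist_norm divide_le_eq power2_eq_square mult.assoc)
next
  show "((\<lambda>y. C * norm (y - x)) \<longlongrightarrow> 0) (at x)"
    by (intro tendsto_eq_intros) auto
qed

lemma has_derivative_exp_zero:
  "(exp has_derivative (\<lambda>X. X)) (at (0::'a::{real_normed_algebra_1,banach}))"
proof (rule has_derivative_quadratic_remainder[where d = 1 and C = 3])
  fix X :: 'a assume "norm (X - 0) < 1"
  then have "exp (norm X) \<le> exp 1"
    by simp
  then have "exp (norm X) \<le> 3"
    using exp_le by linarith
  then have "norm X * norm X * exp (norm X) \<le> norm X * norm X * 3"
    by (simp add: mult_left_mono)
  then show "norm (exp X - exp 0 - (X - 0)) \<le> 3 * (norm (X - 0))\<^sup>2"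
    using norm_exp_remainder_le[of X] by (simp add: power2_eq_square mult.commute)
qed (simp_all add: bounded_linear_ident)

lemma continuous_on_exp_banach: "continuous_on UNIV (exp :: 'a::{real_normed_algebra_1,banach} \<Rightarrow> 'a)"
proof -
  have "continuous_on (ball 0 R) (exp :: 'a \<Rightarrow> 'a)" for R
  proof (rule uniform_limit_theorem)
    have bound: "norm (X ^ n /\<^sub>R fact n) \<le> R ^ n / fact n" if "X \<in> ball 0 R" for X :: 'a and n
      using that by (simp add: divide_inverse mult.commute)
        (intro mult_left_mono order_trans[OF norm_power_ineq] power_mono, auto)
    have summable: "summable (\<lambda>n. R ^ n / fact n)"
      using summable_exp[of R] by (simp add: divide_inverse mult.commute)
    show "uniform_limit (ball 0 R) (\<lambda>n (X::'a). \<Sum>i<n. X ^ i /\<^sub>R fact i) exp sequentially"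
      unfolding exp_def by (rule Weierstrass_m_test[OF bound summable])
  qed (auto intro!: always_eventually continuous_intros)
  then have "isCont exp X" for X :: 'a
    using continuous_on_eq_continuous_at[of "ball 0 (norm X + 1)" exp] by auto
  then show ?thesis
    by (simp add: continuous_at_imp_continuous_on)
qed

section \<open>Invertible elements and the derivative of the inverse\<close>

text \<open>\<open>real^'n\<close> is a ring under componentwise multiplication, and the simplifier turns
  \<open>v + v\<close> into \<open>2 * v\<close>.\<close>

lemma vec_numeral_mult: "(numeral k :: real^'n) * x = (numeral k :: real) *\<^sub>R x"
  by (metis of_real_numeral scaleR_conv_of_real)

locale jordan_trace_algebra =
  fixes jm :: "real^'n \<Rightarrow> real^'n \<Rightarrow> real^'n" and e :: "real^'n"
    and \<gamma> :: "real^'n \<Rightarrow> real^'n \<Rightarrow> real"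
  assumes jordan: "is_jordan_algebra jm" and unit: "\<And>x. jm e x = x"
    and trace: "is_trace_form jm \<gamma>" and nondeg: "nondegenerate_form \<gamma>"
begin

sublocale real_unital_jordan jm e
proof
  have "bilinear jm" using jordan unfolding is_jordan_algebra_def by blast
  then show "jm (x + y) z = jm x z + jm y z" "jm (r *\<^sub>R x) z = r *\<^sub>R jm x z" for x y z r
    by (simp_all add: bilinear_ladd bilinear_lmul)
  show "jm x y = jm y x" "jm x (jm (jm x x) y) = jm (jm x x) (jm x y)" for x y
    using jordan unfolding is_jordan_algebra_def by blast+
qed (rule unit)

sublocale J: bounded_bilinear jm
  using jordan unfolding is_jordan_algebra_def by (simp add: bilinear_conv_bounded_bilinear)

sublocale G: bounded_bilinear \<gamma>
  using trace unfolding is_trace_form_def by (simp add: bilinear_conv_bounded_bilinear)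

lemma trace_commute: "\<gamma> u v = \<gamma> v u"
  and trace_assoc: "\<gamma> (jm u v) w = \<gamma> u (jm v w)"
  using trace unfolding is_trace_form_def by auto

lemma mult_self_adjoint: "\<gamma> (jm a u) v = \<gamma> u (jm a v)"
  using trace_assoc[of u a v] by (simp add: mult_commute[of a u])

lemma P_self_adjoint: "\<gamma> (P x u) v = \<gamma> u (P x v)"
  unfolding P_def by (simp only: G.diff_left G.diff_right G.scaleR_left G.scaleR_right mult_self_adjoint)

lemma Pop_eq_P: "Pop jm = P"
  by (simp add: Pop_def P_def fun_eq_iff)

lemma linear_P: "linear (P x)"
  by (rule linearI) (simp_all add: P_add P_scaleR)

lemma bounded_linear_P: "bounded_linear (P x)"
  using linear_P linear_conv_bounded_linear by blast

lemma jinvertible_iff_inj: "jinvertible jm x \<longleftrightarrow> inj (P x)"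
  unfolding jinvertible_def Pop_eq_P using det_nz_iff_inj[OF linear_P] .

context
  fixes x assumes x: "jinvertible jm x"
begin

lemma bij_P: "bij (P x)"
  using x linear_inj_imp_surj[OF linear_P] unfolding jinvertible_iff_inj bij_def by blast

lemma P_jinverse: "P x (jinverse jm x) = x"
  unfolding jinverse_def Pop_eq_P using bij_P by (simp add: bij_is_surj surj_f_inv_f)

lemma mult_jinverse: "jm x (jinverse jm x) = e"
  using mult_inverse x P_jinverse unfolding jinvertible_iff_inj by blast

lemma mult_jinverse_commute: "jm x (jm (jinverse jm x) w) = jm (jinverse jm x) (jm x w)"
  using mult_inverse_commute x P_jinverse unfolding jinvertible_iff_inj by blast

lemma P_jinverse_left: "P (jinverse jm x) (P x w) = w"
  using P_inverse_left x P_jinverse unfolding jinvertible_iff_inj by blast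

lemma P_jinverse_right: "P x (P (jinverse jm x) w) = w"
  using bij_P P_jinverse_left by (metis bij_pointE)

lemma jinvertible_jinverse: "jinvertible jm (jinverse jm x)"
  unfolding jinvertible_iff_inj by (metis P_jinverse_right injI)

lemma P_jinverse_self: "P (jinverse jm x) x = jinverse jm x"
  using P_jinverse_left[of "jinverse jm x"] P_jinverse by simp

lemma Pbil_jinverse: "Pbil x h (jinverse jm x) = h"
proof -
  have "jm x (jm h (jinverse jm x)) = jm (jm x h) (jinverse jm x)"
    using mult_jinverse_commute[of h] by (metis mult_commute)
  then show ?thesis
    unfolding Pbil_def using mult_jinverse by (simp add: mult_unit)
qed

end

lemma jinverse_unique: "jinvertible jm x \<Longrightarrow> P x w = x \<Longrightarrow> jinverse jm x = w"
  using P_jinverse jinvertible_iff_inj injD by metis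

lemma jinverse_jinverse: "jinvertible jm x \<Longrightarrow> jinverse jm (jinverse jm x) = x"
  using jinverse_unique[OF jinvertible_jinverse P_jinverse_self] .

lemma jinvertible_unit: "jinvertible jm e"
  unfolding jinvertible_iff_inj by (simp add: P_unit inj_on_def)

lemma jinverse_unit: "jinverse jm e = e"
  by (rule jinverse_unique[OF jinvertible_unit]) (simp add: P_unit)

lemma jinverse_nonzero: "jinvertible jm x \<Longrightarrow> jinverse jm x \<noteq> 0"
proof
  assume "jinvertible jm x" "jinverse jm x = 0"
  then have "inj (P 0)" using jinvertible_jinverse jinvertible_iff_inj by metis
  moreover have "P 0 0 = P 0 (axis undefined 1)" by (simp add: P_def mult_zero_left)
  ultimately show False by (metis injD axis_eq_0_iff zero_neq_one)
qed

lemma norm_Pbil_bound: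
  obtains C where "C > 0" "\<And>a b v. norm (Pbil a b v) \<le> C * norm a * norm b * norm v"
proof -
  obtain K where K: "K > 0" "\<And>a b. norm (jm a b) \<le> norm a * norm b * K"
    using J.pos_bounded by blast
  have nested: "norm (jm a (jm b v)) \<le> K * K * norm a * norm b * norm v"
    "norm (jm (jm a b) v) \<le> K * K * norm a * norm b * norm v" for a b v
  proof -
    have "norm (jm a (jm b v)) \<le> norm a * norm (jm b v) * K" by (rule K(2))
    also have "\<dots> \<le> norm a * (norm b * norm v * K) * K"
      using K(1) by (intro mult_right_mono mult_left_mono K(2)) auto
    finally show "norm (jm a (jm b v)) \<le> K * K * norm a * norm b * norm v" by (simp add: ac_simps)
    have "norm (jm (jm a b) v) \<le> norm (jm a b) * norm v * K" by (rule K(2))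
    also have "\<dots> \<le> (norm a * norm b * K) * norm v * K"
      using K(1) by (intro mult_right_mono K(2)) auto
    finally show "norm (jm (jm a b) v) \<le> K * K * norm a * norm b * norm v" by (simp add: ac_simps)
  qed
  have "norm (Pbil a b v) \<le> 3 * K * K * norm a * norm b * norm v" for a b v
  proof -
    have "norm (Pbil a b v) \<le> norm (jm a (jm b v)) + norm (jm b (jm a v)) + norm (jm (jm a b) v)"
      unfolding Pbil_def by (meson norm_triangle_ineq norm_triangle_ineq4 order_trans add_right_mono)
    also have "\<dots> \<le> 3 * K * K * norm a * norm b * norm v"
      using nested[of a b v] nested[of b a v] by (simp add: ac_simps)
    finally show ?thesis .
  qed
  with K(1) show ?thesis by (intro that[of "3 * K * K"]) auto
qed

lemma P_lower_bound_near:
  assumes x: "jinvertible jm x"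
  obtains B d where "B > 0" "d > 0" "\<And>y v. norm (y - x) < d \<Longrightarrow> B * norm v \<le> norm (P y v)"
proof -
  obtain B where B: "B > 0" "\<And>v. B * norm v \<le> norm (P x v)"
    using linear_inj_bounded_below_pos[OF linear_P] x jinvertible_iff_inj by metis
  obtain C where C: "C > 0" "\<And>a b v. norm (Pbil a b v) \<le> C * norm a * norm b * norm v"
    using norm_Pbil_bound by blast
  define c where "c = C * (2 * norm x + 1)"
  have c: "c > 0" unfolding c_def using C(1) by (simp add: add_nonneg_pos)
  define d where "d = min 1 (B / (2 * c))"
  show ?thesis
  proof (rule that[of "B / 2" d])
    show "B / 2 > 0" "d > 0" using B c by (auto simp: d_def)
    fix y v assume yd: "norm (y - x) < d"
    define h where "h = y - x"
    have h: "norm h \<le> 1" "c * norm h \<le> B / 2" using yd c by (auto simp: d_def h_def field_simps)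
    have "P y v - P x v = 2 *\<^sub>R Pbil x h v + Pbil h h v"
      using P_add_point[of x h v] by (simp add: h_def P_eq_Pbil)
    then have "norm (P y v - P x v) \<le> 2 * (C * norm x * norm h * norm v) + C * norm h * norm h * norm v"
      by (metis C(2) add_mono norm_scaleR norm_triangle_le abs_numeral mult_left_mono zero_le_numeral)
    also have "\<dots> \<le> c * norm h * norm v"
    proof -
      have "C * norm h * norm v * norm h \<le> C * norm h * norm v"
        by (rule mult_right_le_one_le) (use C(1) h(1) in auto)
      then show ?thesis unfolding c_def by (simp add: algebra_simps)
    qed
    also have "\<dots> \<le> B / 2 * norm v"
      using mult_right_mono[OF h(2), of "norm v"] by simp
    finally have "norm (P y v - P x v) \<le> B / 2 * norm v" .
    then show "B / 2 * norm v \<le> norm (P y v)"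
      using B(2)[of v] norm_triangle_ineq3[of "P x v" "P y v"] by (simp add: norm_minus_commute)
  qed
qed

lemma jinvertible_if_lower_bound:
  assumes "B > 0" "\<And>v. B * norm v \<le> norm (P y v)"
  shows "jinvertible jm y"
  unfolding jinvertible_iff_inj
proof (rule injI)
  fix u w assume "P y u = P y w"
  then have "B * norm (u - w) \<le> 0" using assms(2)[of "u - w"] by (simp add: P_diff)
  then show "u = w" using assms(1) by (simp add: mult_le_0_iff)
qed

lemma open_jinvertible: "open {x. jinvertible jm x}"
  unfolding open_dist
proof safe
  fix x assume "jinvertible jm x"
  then obtain B d where "B > 0" "d > 0" "\<And>y v. norm (y - x) < d \<Longrightarrow> B * norm v \<le> norm (P y v)"
    using P_lower_bound_near by metis
  then show "\<exists>d>0. \<forall>y. dist y x < d \<longrightarrow> y \<in> {x. jinvertible jm x}"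
    using jinvertible_if_lower_bound by (auto simp: dist_norm)
qed

lemma P_jinverse_expansion:
  assumes x: "jinvertible jm x" and y: "jinvertible jm y"
  defines "h \<equiv> y - x" and "z \<equiv> jinverse jm x"
  shows "P y (jinverse jm y - z + P z h) = - P h z + 2 *\<^sub>R Pbil x h (P z h) + P h (P z h)"
proof -
  have y_eq: "y = x + h" by (simp add: h_def)
  have "P y z = x + 2 *\<^sub>R h + P h z"
    unfolding y_eq P_add_point z_def using P_jinverse[OF x] Pbil_jinverse[OF x] by simp
  moreover have "P y (P z h) = h + 2 *\<^sub>R Pbil x h (P z h) + P h (P z h)"
    unfolding y_eq P_add_point z_def using P_jinverse_right[OF x] by simp
  ultimately show ?thesis
    using P_jinverse[OF y] by (simp add: P_add P_diff y_eq vec_numeral_mult)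
qed

lemma norm_P_expansion_le:
  obtains A where "\<And>h. norm h \<le> 1 \<Longrightarrow>
    norm (- P h z + 2 *\<^sub>R Pbil x h (P z h) + P h (P z h)) \<le> A * (norm h)\<^sup>2"
proof -
  obtain C where C: "C > 0" "\<And>a b v. norm (Pbil a b v) \<le> C * norm a * norm b * norm v"
    using norm_Pbil_bound by blast
  have CP: "norm (P a v) \<le> C * norm a * norm a * norm v" for a v
    by (simp add: P_eq_Pbil C(2))
  define A where "A = C * norm z + 2 * C * C * norm x * norm z * norm z + C * C * norm z * norm z"
  show ?thesis
  proof (rule that[of A])
    fix h :: "real^'n" assume h: "norm h \<le> 1"
    have Pzh: "norm (P z h) \<le> C * norm z * norm z * norm h" by (rule CP)
    have n1: "norm (P h z) \<le> C * norm z * (norm h)\<^sup>2"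
      using CP[of h z] by (simp add: power2_eq_square ac_simps)
    have "norm (Pbil x h (P z h)) \<le> C * norm x * norm h * norm (P z h)" by (rule C(2))
    also have "\<dots> \<le> C * norm x * norm h * (C * norm z * norm z * norm h)"
      using C(1) by (intro mult_left_mono Pzh) auto
    finally have n2: "norm (Pbil x h (P z h)) \<le> C * C * norm x * norm z * norm z * (norm h)\<^sup>2"
      by (simp add: power2_eq_square ac_simps)
    have "norm (P h (P z h)) \<le> C * norm h * norm h * norm (P z h)" by (rule CP)
    also have "\<dots> \<le> C * norm h * norm h * (C * norm z * norm z * norm h)"
      using C(1) by (intro mult_left_mono Pzh) auto
    also have "\<dots> = (C * C * norm z * norm z * (norm h)\<^sup>2) * norm h"
      by (simp add: power2_eq_square ac_simps)
    also have "\<dots> \<le> C * C * norm z * norm z * (norm h)\<^sup>2"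
      using h C(1) by (intro mult_right_le_one_le) auto
    finally have n3: "norm (P h (P z h)) \<le> C * C * norm z * norm z * (norm h)\<^sup>2" .
    have "norm (- P h z + 2 *\<^sub>R Pbil x h (P z h) + P h (P z h))
        \<le> norm (P h z) + 2 * norm (Pbil x h (P z h)) + norm (P h (P z h))"
      using norm_triangle_ineq[of "- P h z + 2 *\<^sub>R Pbil x h (P z h)" "P h (P z h)"]
        norm_triangle_ineq[of "- P h z" "2 *\<^sub>R Pbil x h (P z h)"] by simp
    moreover have "A * (norm h)\<^sup>2 = C * norm z * (norm h)\<^sup>2
        + 2 * (C * C * norm x * norm z * norm z * (norm h)\<^sup>2) + C * C * norm z * norm z * (norm h)\<^sup>2"
      unfolding A_def by (simp add: algebra_simps)
    ultimately show "norm (- P h z + 2 *\<^sub>R Pbil x h (P z h) + P h (P z h)) \<le> A * (norm h)\<^sup>2"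
      using n1 n2 n3 by linarith
  qed
qed

lemma has_derivative_jinverse:
  assumes x: "jinvertible jm x"
  shows "(jinverse jm has_derivative (\<lambda>h. - P (jinverse jm x) h)) (at x)"
proof -
  define z where "z = jinverse jm x"
  obtain B d where Bd: "B > 0" "d > 0" "\<And>y v. norm (y - x) < d \<Longrightarrow> B * norm v \<le> norm (P y v)"
    using P_lower_bound_near[OF x] by blast
  obtain A where A: "\<And>h. norm h \<le> 1 \<Longrightarrow>
      norm (- P h z + 2 *\<^sub>R Pbil x h (P z h) + P h (P z h)) \<le> A * (norm h)\<^sup>2"
    using norm_P_expansion_le by blast
  show ?thesis
  proof (rule has_derivative_quadratic_remainder[where d = "min d 1" and C = "A / B"])
    show "bounded_linear (\<lambda>h. - P (jinverse jm x) h)"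
      using bounded_linear_P bounded_linear_minus by blast
    show "min d 1 > 0" using Bd(2) by simp
    fix y assume yd: "norm (y - x) < min d 1"
    define r where "r = jinverse jm y - z + P z (y - x)"
    have y: "jinvertible jm y"
      using jinvertible_if_lower_bound[OF Bd(1) Bd(3)] yd by simp
    have "B * norm r \<le> norm (P y r)"
      using Bd(3) yd by simp
    also have "P y r = - P (y - x) z + 2 *\<^sub>R Pbil x (y - x) (P z (y - x)) + P (y - x) (P z (y - x))"
      unfolding r_def z_def by (rule P_jinverse_expansion[OF x y])
    also have "norm \<dots> \<le> A * (norm (y - x))\<^sup>2"
      using A yd by simp
    finally show "norm (jinverse jm y - jinverse jm x - - P (jinverse jm x) (y - x)) \<le> A / B * (norm (y - x))\<^sup>2"
      using Bd(1) unfolding r_def z_def by (simp add: field_simps)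
  qed
qed

end

section \<open>Flows of multiplication operators\<close>

context jordan_trace_algebra
begin

lemma has_vector_derivative_P:
  assumes "(Y has_vector_derivative Y') (at s)" and "(V has_vector_derivative V') (at s)"
  shows "((\<lambda>s. P (Y s) (V s)) has_vector_derivative 2 *\<^sub>R Pbil (Y s) Y' (V s) + P (Y s) V') (at s)"
proof -
  have YV: "((\<lambda>s. jm (Y s) (V s)) has_vector_derivative jm (Y s) V' + jm Y' (V s)) (at s)"
    by (rule J.has_vector_derivative[OF assms])
  have YYV: "((\<lambda>s. jm (Y s) (jm (Y s) (V s))) has_vector_derivative
      jm (Y s) (jm (Y s) V' + jm Y' (V s)) + jm Y' (jm (Y s) (V s))) (at s)"
    by (rule J.has_vector_derivative[OF assms(1) YV])
  have YY: "((\<lambda>s. jm (Y s) (Y s)) has_vector_derivative jm (Y s) Y' + jm Y' (Y s)) (at s)"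
    by (rule J.has_vector_derivative[OF assms(1) assms(1)])
  have "((\<lambda>s. 2 *\<^sub>R jm (Y s) (jm (Y s) (V s)) - jm (jm (Y s) (Y s)) (V s)) has_vector_derivative
      2 *\<^sub>R (jm (Y s) (jm (Y s) V' + jm Y' (V s)) + jm Y' (jm (Y s) (V s)))
      - (jm (jm (Y s) (Y s)) V' + jm (jm (Y s) Y' + jm Y' (Y s)) (V s))) (at s)"
    by (intro has_vector_derivative_diff bounded_linear.has_vector_derivative[OF bounded_linear_scaleR_right]
        YYV J.has_vector_derivative[OF YY assms(2)])
  then show ?thesis
    unfolding P_def[abs_def] Pbil_def
    by (simp add: mult_linear mult_commute[of Y' "Y s"] vec_numeral_mult algebra_simps)
qed

definition L :: "real^'n \<Rightarrow> (real^'n) endo" where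
  "L a = endo (jm a)"

lemma apply_endo_L [simp]: "apply_endo (L a) v = jm a v"
  unfolding L_def by (simp add: apply_endo_endo J.bounded_linear_right)

lemma bounded_linear_L: "bounded_linear L"
proof -
  obtain K where K: "K > 0" "\<And>a b. norm (jm a b) \<le> norm a * norm b * K"
    using J.pos_bounded by blast
  show ?thesis
  proof (rule bounded_linear_intro[of _ K])
    show "L (a + b) = L a + L b" "L (r *\<^sub>R a) = r *\<^sub>R L a" for a b r
      by (simp_all add: apply_endo_eqI apply_endo_add apply_endo_scaleR mult_linear)
    have "norm (L a) = norm (Blinfun (jm a))" for a
      by (simp add: L_def endo_def norm_endo.rep_eq Abs_endo_inverse)
    also have "\<dots> a \<le> norm a * K" for a
    proof (rule norm_blinfun_bound)
      show "norm (blinfun_apply (Blinfun (jm a)) v) \<le> norm a * K * norm v" for v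
        using K(2)[of a v] by (simp add: bounded_linear_Blinfun_apply J.bounded_linear_right mult_ac)
    qed (use K(1) in simp)
    finally show "norm (L a) \<le> norm a * K" for a .
  qed
qed

definition flow :: "real \<Rightarrow> real^'n \<Rightarrow> real^'n \<Rightarrow> real^'n" where
  "flow t a v = apply_endo (exp (t *\<^sub>R L a)) v"

lemma flow_zero [simp]: "flow 0 a v = v"
  unfolding flow_def by simp

lemma flow_inverse: "flow t a (flow (- t) a v) = v" "flow (- t) a (flow t a v) = v"
  unfolding flow_def apply_endo_times[symmetric]
  using exp_minus_inverse[of "t *\<^sub>R L a"] exp_minus_inverse[of "(- t) *\<^sub>R L a"] by simp_all

lemma flow_inj: "flow t a u = flow t a v \<Longrightarrow> u = v"
  by (metis flow_inverse(2))

lemma flow_mult_commute: "flow t a (jm a v) = jm a (flow t a v)"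
  using arg_cong[OF exp_times_scaleR_commute[of t "L a"], of "\<lambda>M. apply_endo M v"]
  unfolding flow_def by (simp add: apply_endo_times)

lemma has_vector_derivative_exp_L:
  "((\<lambda>s. exp ((c - s) *\<^sub>R L a)) has_vector_derivative - (L a * exp ((c - s) *\<^sub>R L a))) (at s)"
proof -
  have "((\<lambda>s. c - s) has_vector_derivative - 1) (at s)"
    using has_vector_derivative_diff[OF has_vector_derivative_const has_vector_derivative_id] by simp
  from vector_diff_chain_at[OF this exp_scaleR_has_vector_derivative_left]
  show ?thesis by (simp add: o_def)
qed

lemma has_vector_derivative_flow:
  "((\<lambda>t. flow t a v) has_vector_derivative jm a (flow t a v)) (at t within S)"
proof -
  have "((\<lambda>t. apply_endo (exp (t *\<^sub>R L a)) v) has_vector_derivative apply_endo (L a * exp (t *\<^sub>R L a)) v) (at t)"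
    by (rule bounded_linear.has_vector_derivative[OF bounded_bilinear.bounded_linear_left[OF bounded_bilinear_apply_endo]
          exp_scaleR_has_vector_derivative_left])
  then show ?thesis
    unfolding flow_def by (simp add: apply_endo_times has_vector_derivative_at_within)
qed

lemma has_vector_derivative_flow_reverse:
  "((\<lambda>s. flow (c - s) a v) has_vector_derivative - jm a (flow (c - s) a v)) (at s)"
  unfolding flow_def
  using bounded_linear.has_vector_derivative[OF bounded_bilinear.bounded_linear_left[OF bounded_bilinear_apply_endo]
      has_vector_derivative_exp_L]
  by (simp add: apply_endo_times apply_endo_scaleR bounded_bilinear.minus_left[OF bounded_bilinear_apply_endo])

lemma continuous_on_flow: "continuous_on S (\<lambda>t. flow t a v)"
  by (intro continuous_at_imp_continuous_on ballI has_vector_derivative_continuous[OF has_vector_derivative_flow])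

text \<open>Pulled back along the reverse flow, a solution of \<open>Q' = a \<bullet> Q\<close> has derivative zero.\<close>

lemma flow_unique:
  assumes Q: "\<And>s. (Q has_vector_derivative jm a (Q s)) (at s)"
  shows "Q t = flow t a (Q 0)"
proof -
  define g where "g s = apply_endo (exp ((0 - s) *\<^sub>R L a)) (Q s)" for s
  have "(g has_derivative (\<lambda>h. 0)) (at s)" for s
  proof -
    have "(g has_vector_derivative
        apply_endo (exp ((0 - s) *\<^sub>R L a)) (jm a (Q s)) + apply_endo (- (L a * exp ((0 - s) *\<^sub>R L a))) (Q s)) (at s)"
      unfolding g_def by (rule bounded_bilinear.has_vector_derivative[OF bounded_bilinear_apply_endo
            has_vector_derivative_exp_L Q])
    moreover have "apply_endo (exp ((0 - s) *\<^sub>R L a)) (jm a (Q s)) = apply_endo (L a * exp ((0 - s) *\<^sub>R L a)) (Q s)"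
      using flow_mult_commute[of "0 - s" a "Q s"] by (simp add: flow_def apply_endo_times)
    ultimately show ?thesis
      by (simp add: has_vector_derivative_def bounded_bilinear.minus_left[OF bounded_bilinear_apply_endo])
  qed
  then have "g t = g 0"
    using has_derivative_zero_constant[of UNIV g] by (metis convex_UNIV UNIV_I has_derivative_at_withinI)
  then have "flow (- t) a (Q t) = Q 0"
    by (simp add: g_def flow_def)
  then show ?thesis
    by (metis flow_inverse(1))
qed

lemma P_flow: "P (flow t a x) w = flow t a (P x (flow t a w))"
proof -
  define Q where "Q s = P (flow s a x) (flow (0 - s) a (flow t a w))" for s
  have "(Q has_vector_derivative jm a (Q s)) (at s)" for s
  proof -
    have "(Q has_vector_derivative 2 *\<^sub>R Pbil (flow s a x) (jm a (flow s a x)) (flow (0 - s) a (flow t a w))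
        + P (flow s a x) (- jm a (flow (0 - s) a (flow t a w)))) (at s)"
      unfolding Q_def
      by (rule has_vector_derivative_P[OF has_vector_derivative_flow has_vector_derivative_flow_reverse])
    then show ?thesis
      unfolding Pbil_mult_self Q_def by (simp add: P_minus)
  qed
  then have "Q t = flow t a (Q 0)" by (rule flow_unique)
  then show ?thesis
    by (simp add: Q_def flow_inverse)
qed

lemma flow_self_adjoint: "\<gamma> (flow t a u) w = \<gamma> u (flow t a w)"
proof -
  define g where "g s = \<gamma> (flow s a u) (flow (t - s) a w)" for s
  have "(g has_derivative (\<lambda>h. 0)) (at s)" for s
  proof -
    have "(g has_vector_derivative \<gamma> (flow s a u) (- jm a (flow (t - s) a w)) + \<gamma> (jm a (flow s a u)) (flow (t - s) a w)) (at s)"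
      unfolding g_def by (rule G.has_vector_derivative[OF has_vector_derivative_flow has_vector_derivative_flow_reverse])
    then show ?thesis
      by (simp add: has_vector_derivative_def G.minus_right mult_self_adjoint)
  qed
  then have "g 0 = g t"
    using has_derivative_zero_constant[of UNIV g] by (metis convex_UNIV UNIV_I has_derivative_at_withinI)
  then show ?thesis
    unfolding g_def by simp
qed

end

context jordan_trace_algebra
begin

lemma jinvertible_flow: "jinvertible jm x \<Longrightarrow> jinvertible jm (flow t a x)"
  unfolding jinvertible_iff_inj by (rule injI) (metis P_flow flow_inj injD)

lemma jinverse_flow:
  assumes "jinvertible jm x"
  shows "jinverse jm (flow t a x) = flow (- t) a (jinverse jm x)"
proof (rule jinverse_unique[OF jinvertible_flow[OF assms]])
  show "P (flow t a x) (flow (- t) a (jinverse jm x)) = flow t a x"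
    using P_flow[of t a x "flow (- t) a (jinverse jm x)"] by (simp add: flow_inverse P_jinverse[OF assms])
qed

lemma zeta_flow: "jinvertible jm x \<Longrightarrow> zeta jm \<gamma> (flow t a x) (flow t a u) = zeta jm \<gamma> x u"
  unfolding zeta_def by (simp add: jinverse_flow flow_self_adjoint flow_inverse)

definition unit_component :: "(real^'n) set" where
  "unit_component = connected_component_set {x. jinvertible jm x} e"

lemma jinvertible_unit_component: "x \<in> unit_component \<Longrightarrow> jinvertible jm x"
  unfolding unit_component_def using connected_component_subset by blast

lemma unit_mem_unit_component: "e \<in> unit_component"
  unfolding unit_component_def using jinvertible_unit by simp

lemma open_unit_component: "open unit_component"
  unfolding unit_component_def by (rule open_connected_component[OF open_jinvertible])

lemma connected_subset_unit_component:
  "connected A \<Longrightarrow> x \<in> A \<Longrightarrow> x \<in> unit_component \<Longrightarrow> A \<subseteq> {x. jinvertible jm x} \<Longrightarrow> A \<subseteq> unit_component"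
  unfolding unit_component_def by (metis connected_component_eq connected_component_maximal)

lemma flow_mem_unit_component:
  assumes x: "x \<in> unit_component"
  shows "flow t a x \<in> unit_component"
proof -
  have "connected (range (\<lambda>s. flow s a x))"
    by (rule connected_continuous_image[OF continuous_on_flow connected_UNIV])
  moreover have "x \<in> range (\<lambda>s. flow s a x)"
    by (metis flow_zero rangeI)
  moreover have "range (\<lambda>s. flow s a x) \<subseteq> {x. jinvertible jm x}"
    using jinvertible_flow jinvertible_unit_component[OF x] by blast
  ultimately have "range (\<lambda>s. flow s a x) \<subseteq> unit_component"
    using connected_subset_unit_component x by blast
  then show ?thesis by blast
qed

definition zeta_automorphism :: "(real^'n \<Rightarrow> real^'n) \<Rightarrow> bool" where
  "zeta_automorphism g \<longleftrightarrow> g ` unit_component \<subseteq> unit_component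
     \<and> (\<forall>x\<in>unit_component. \<forall>u. zeta jm \<gamma> (g x) (g u) = zeta jm \<gamma> x u)"

lemma zeta_automorphism_id: "zeta_automorphism id"
  unfolding zeta_automorphism_def by auto

lemma zeta_automorphism_comp: "zeta_automorphism f \<Longrightarrow> zeta_automorphism g \<Longrightarrow> zeta_automorphism (f \<circ> g)"
  unfolding zeta_automorphism_def by (auto simp: image_subset_iff)

lemma zeta_automorphism_flow: "zeta_automorphism (flow t a)"
  unfolding zeta_automorphism_def
  using flow_mem_unit_component by (auto simp: zeta_flow jinvertible_unit_component)

definition exp_unit :: "real^'n \<Rightarrow> real^'n" where
  "exp_unit a = flow 1 a e"

lemma P_exp_unit: "P (exp_unit a) = flow 1 a \<circ> flow 1 a"
  unfolding exp_unit_def by (rule ext) (simp add: P_flow P_unit)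

lemma zeta_automorphism_P_exp_unit: "zeta_automorphism (P (exp_unit a))"
  unfolding P_exp_unit by (intro zeta_automorphism_comp zeta_automorphism_flow)

lemma zeta_automorphism_inv_P_exp_unit: "zeta_automorphism (inv (P (exp_unit a)))"
proof -
  have "inv (P (exp_unit a)) = flow (-1) a \<circ> flow (-1) a"
    unfolding P_exp_unit by (rule inv_equality) (simp_all add: flow_inverse)
  then show ?thesis by (simp add: zeta_automorphism_comp zeta_automorphism_flow)
qed

lemma has_derivative_exp_unit: "(exp_unit has_derivative (\<lambda>h. h)) (at 0)"
proof -
  have "(exp has_derivative (\<lambda>X. X)) (at (L 0))"
    using has_derivative_exp_zero linear_simps(3)[OF bounded_linear_L] by simp
  from has_derivative_compose[OF bounded_linear_imp_has_derivative[OF bounded_linear_L] this]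
  have "((\<lambda>a. exp (L a)) has_derivative L) (at 0)" by simp
  then have "((\<lambda>a. apply_endo (exp (L a)) e) has_derivative (\<lambda>h. apply_endo (L h) e)) (at 0)"
    by (rule has_derivative_compose[OF _ bounded_linear_imp_has_derivative[OF
          bounded_bilinear.bounded_linear_left[OF bounded_bilinear_apply_endo]]])
  then show ?thesis
    unfolding exp_unit_def flow_def by (simp add: mult_unit)
qed

lemma unit_in_interior_exp_unit: "e \<in> interior (range exp_unit)"
proof -
  have "continuous_on UNIV (\<lambda>a. exp (L a))"
    using continuous_on_compose2[OF continuous_on_exp_banach linear_continuous_on[OF bounded_linear_L]] by simp
  then have "continuous_on UNIV exp_unit"
    unfolding exp_unit_def flow_def scaleR_one
    by (rule continuous_on_compose2[OF linear_continuous_on[OF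
          bounded_bilinear.bounded_linear_left[OF bounded_bilinear_apply_endo]]]) auto
  then have "exp_unit 0 \<in> interior (range exp_unit)"
    by (intro sussmann_open_mapping[OF open_UNIV _ _ has_derivative_exp_unit bounded_linear_ident]) auto
  moreover have "exp_unit 0 = e"
    unfolding exp_unit_def flow_def using linear_simps(3)[OF bounded_linear_L] by simp
  ultimately show ?thesis by simp
qed

lemma zeta_automorphism_gen_group:
  assumes "V \<subseteq> range exp_unit" and "g \<in> gen_group (Pop jm ` V)"
  shows "zeta_automorphism g"
  using assms(2)
proof (induction rule: gen_group.induct)
  case (gen_mult g s)
  then obtain u where "u \<in> V" "s = P u"
    unfolding Pop_eq_P by blast
  then obtain a where "s = P (exp_unit a)"
    using assms(1) by blast
  with gen_mult.IH show ?case
    using zeta_automorphism_P_exp_unit zeta_automorphism_comp by blast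
next
  case (gen_inv g s)
  then obtain u where "u \<in> V" "s = P u"
    unfolding Pop_eq_P by blast
  then obtain a where "s = P (exp_unit a)"
    using assms(1) by blast
  with gen_inv.IH show ?case
    using zeta_automorphism_inv_P_exp_unit zeta_automorphism_comp by blast
qed (rule zeta_automorphism_id)

end

section \<open>The 1-form \<open>\<zeta>\<close>\<close>

context jordan_trace_algebra
begin

lemma zeta_position: "jinvertible jm x \<Longrightarrow> zeta jm \<gamma> x x = - \<gamma> e e"
  unfolding zeta_def using mult_self_adjoint[of x e "jinverse jm x"]
  by (simp add: mult_unit mult_jinverse)

lemma zeta_mult: "jinvertible jm x \<Longrightarrow> zeta jm \<gamma> x (jm x w) = - \<gamma> w e"
  unfolding zeta_def using mult_self_adjoint[of x w "jinverse jm x"]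
  by (simp add: mult_jinverse)

lemma has_derivative_zeta:
  assumes "jinvertible jm x"
  shows "((\<lambda>y. zeta jm \<gamma> y v) has_derivative (\<lambda>h. \<gamma> v (P (jinverse jm x) h))) (at x)"
proof -
  have "bounded_linear (\<lambda>w. - \<gamma> v w)"
    using G.bounded_linear_right bounded_linear_minus by blast
  then have "((\<lambda>y. - \<gamma> v (jinverse jm y)) has_derivative (\<lambda>h. - \<gamma> v (- P (jinverse jm x) h))) (at x)"
    by (rule has_derivative_compose[OF has_derivative_jinverse[OF assms] bounded_linear_imp_has_derivative])
  then show ?thesis
    unfolding zeta_def by (simp add: G.minus_right trace_commute[of v])
qed

lemma flatD_zeta: "jinvertible jm x \<Longrightarrow> flatD (zeta jm \<gamma>) x u v = \<gamma> v (P (jinverse jm x) u)"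
  unfolding flatD_def using frechet_derivative_at[OF has_derivative_zeta] by metis

lemma flatD_zeta_commute: "jinvertible jm x \<Longrightarrow> flatD (zeta jm \<gamma>) x u v = flatD (zeta jm \<gamma>) x v u"
  using flatD_zeta P_self_adjoint trace_commute by metis

lemma nondegenerate_flatD_zeta:
  assumes x: "jinvertible jm x"
  shows "nondegenerate_form (flatD (zeta jm \<gamma>) x)"
  unfolding nondegenerate_form_def flatD_zeta[OF x]
proof (intro allI impI)
  fix u assume "\<forall>v. \<gamma> v (P (jinverse jm x) u) = 0"
  then have "P (jinverse jm x) u = 0"
    using nondeg trace_commute unfolding nondegenerate_form_def by metis
  then show "u = 0"
    using jinvertible_jinverse[OF x] P_zero unfolding jinvertible_iff_inj by (metis injD)
qed

lemma dim_zeta_kernel: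
  assumes x: "jinvertible jm x"
  shows "dim {u. zeta jm \<gamma> x u = 0} = CARD('n) - 1"
proof -
  define z where "z = jinverse jm x"
  define c :: "real^'n" where "c = (\<Sum>b\<in>Basis. \<gamma> b z *\<^sub>R b)"
  have inner_c: "\<gamma> u z = c \<bullet> u" for u
  proof -
    have "\<gamma> u z = \<gamma> (\<Sum>b\<in>Basis. (u \<bullet> b) *\<^sub>R b) z"
      by (simp add: euclidean_representation)
    also have "\<dots> = c \<bullet> u"
      unfolding c_def by (simp add: G.sum_left G.scaleR_left inner_sum_left inner_commute[of u] mult.commute)
    finally show ?thesis .
  qed
  have "c \<noteq> 0"
  proof
    assume "c = 0"
    then have "\<forall>v. \<gamma> z v = 0" using inner_c trace_commute by simp
    then show False
      using nondeg jinverse_nonzero[OF x] unfolding nondegenerate_form_def z_def by blast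
  qed
  moreover have "{u. zeta jm \<gamma> x u = 0} = {u. c \<bullet> u = 0}"
    unfolding zeta_def z_def[symmetric] inner_c by simp
  ultimately show ?thesis
    using dim_hyperplane[of c] by simp
qed

text \<open>Obtained by differentiating \<open>\<gamma>(W y, y\<inverse>) = 0\<close>.\<close>

lemma derivative_tangent_field:
  assumes S: "open S" "x \<in> S" "S \<subseteq> {x. jinvertible jm x}"
    and W: "W differentiable (at x)" "\<And>y. y \<in> S \<Longrightarrow> zeta jm \<gamma> y (W y) = 0"
  shows "\<gamma> (frechet_derivative W (at x) k) (jinverse jm x) = \<gamma> (W x) (P (jinverse jm x) k)"
proof -
  have x: "jinvertible jm x" using S by blast
  have "((\<lambda>y. \<gamma> (W y) (jinverse jm y)) has_derivative
      (\<lambda>h. \<gamma> (W x) (- P (jinverse jm x) h) + \<gamma> (frechet_derivative W (at x) h) (jinverse jm x))) (at x)"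
    by (rule G.FDERIV[OF W(1)[unfolded frechet_derivative_works] has_derivative_jinverse[OF x]])
  moreover have "((\<lambda>y. \<gamma> (W y) (jinverse jm y)) has_derivative (\<lambda>h. 0)) (at x)"
  proof (rule has_derivative_transform_within_open[OF has_derivative_const S(1,2)])
    show "0 = \<gamma> (W y) (jinverse jm y)" if "y \<in> S" for y
      using W(2)[OF that] unfolding zeta_def by simp
  qed
  ultimately have "(\<lambda>h. \<gamma> (W x) (- P (jinverse jm x) h) + \<gamma> (frechet_derivative W (at x) h) (jinverse jm x)) = (\<lambda>h. 0)"
    by (rule has_derivative_unique)
  from fun_cong[OF this, of k] show ?thesis
    by (simp add: G.minus_right)
qed

lemma zeta_kernel_involutive:
  assumes S: "open S" "x \<in> S" "S \<subseteq> {x. jinvertible jm x}"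
    and X: "X differentiable (at x)" "\<And>y. y \<in> S \<Longrightarrow> zeta jm \<gamma> y (X y) = 0"
    and Z: "Z differentiable (at x)" "\<And>y. y \<in> S \<Longrightarrow> zeta jm \<gamma> y (Z y) = 0"
  shows "zeta jm \<gamma> x (frechet_derivative Z (at x) (X x) - frechet_derivative X (at x) (Z x)) = 0"
proof -
  have "\<gamma> (Z x) (P (jinverse jm x) (X x)) = \<gamma> (X x) (P (jinverse jm x) (Z x))"
    by (metis P_self_adjoint trace_commute)
  with derivative_tangent_field[OF S X, of "Z x"] derivative_tangent_field[OF S Z, of "X x"]
  show ?thesis by (simp add: zeta_def G.diff_left)
qed

lemma jinverse_mem_unit_component:
  assumes x: "x \<in> unit_component"
  shows "jinverse jm x \<in> unit_component"
proof -
  have "continuous_on unit_component (jinverse jm)"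
    by (intro continuous_at_imp_continuous_on ballI has_derivative_continuous[OF has_derivative_jinverse]
        jinvertible_unit_component)
  then have "connected (jinverse jm ` unit_component)"
    by (rule connected_continuous_image) (simp add: unit_component_def connected_connected_component)
  moreover have "e \<in> jinverse jm ` unit_component"
    using unit_mem_unit_component jinverse_unit by (metis image_eqI)
  moreover have "jinverse jm ` unit_component \<subseteq> {x. jinvertible jm x}"
    using jinvertible_unit_component jinvertible_jinverse by auto
  ultimately have "jinverse jm ` unit_component \<subseteq> unit_component"
    using connected_subset_unit_component unit_mem_unit_component by blast
  then show ?thesis using x by blast
qed

lemma frechet_derivative_jinverse:
  "jinvertible jm x \<Longrightarrow> frechet_derivative (jinverse jm) (at x) = (\<lambda>h. - P (jinverse jm x) h)"
  using frechet_derivative_at[OF has_derivative_jinverse] by metis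

lemma P_jinverse_zeta_kernel:
  assumes x: "jinvertible jm x"
  shows "(\<lambda>h. - P (jinverse jm x) h) ` {u. zeta jm \<gamma> x u = 0} = {u. zeta jm \<gamma> (jinverse jm x) u = 0}"
proof (intro set_eqI iffI)
  fix w assume "w \<in> (\<lambda>h. - P (jinverse jm x) h) ` {u. zeta jm \<gamma> x u = 0}"
  then obtain u where "\<gamma> u (jinverse jm x) = 0" "w = - P (jinverse jm x) u"
    unfolding zeta_def by auto
  then show "w \<in> {u. zeta jm \<gamma> (jinverse jm x) u = 0}"
    unfolding zeta_def jinverse_jinverse[OF x]
    using P_self_adjoint[of "jinverse jm x" u x] by (simp add: P_jinverse_self[OF x] G.minus_left)
next
  fix w assume "w \<in> {u. zeta jm \<gamma> (jinverse jm x) u = 0}"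
  then have "\<gamma> (- P x w) (jinverse jm x) = 0"
    unfolding zeta_def jinverse_jinverse[OF x]
    using P_self_adjoint[of x w "jinverse jm x"] by (simp add: P_jinverse[OF x] G.minus_left)
  moreover have "w = - P (jinverse jm x) (- P x w)"
    by (simp add: P_minus P_jinverse_left[OF x])
  ultimately show "w \<in> (\<lambda>h. - P (jinverse jm x) h) ` {u. zeta jm \<gamma> x u = 0}"
    unfolding zeta_def by (intro image_eqI[of _ _ "- P x w"]) auto
qed

lemma flatD_zeta_jinverse:
  assumes x: "jinvertible jm x"
  shows "flatD (zeta jm \<gamma>) (jinverse jm x) (- P (jinverse jm x) u) (- P (jinverse jm x) v)
    = flatD (zeta jm \<gamma>) x u v"
  unfolding flatD_zeta[OF x] flatD_zeta[OF jinvertible_jinverse[OF x]] jinverse_jinverse[OF x]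
  by (simp add: P_minus P_jinverse_right[OF x] G.minus_left G.minus_right P_self_adjoint)

end

theorem lemma4p6:
  fixes jm :: "real^'n \<Rightarrow> real^'n \<Rightarrow> real^'n"
    and \<gamma> :: "real^'n \<Rightarrow> real^'n \<Rightarrow> real"
    and e :: "real^'n"
  assumes dim: "CARD('n) \<ge> 2"
    and jordan: "is_jordan_algebra jm"
    and unit: "\<forall>x. jm e x = x"
    and trace: "is_trace_form jm \<gamma>"
    and nondeg: "nondegenerate_form \<gamma>"
  defines "Y \<equiv> connected_component_set {x. jinvertible jm x} e"
    and "\<zeta> \<equiv> zeta jm \<gamma>"
    and "\<Delta> \<equiv> (\<lambda>x. {u. zeta jm \<gamma> x u = 0})"
    and "\<Gamma> \<equiv> {u. \<gamma> u e = 0}"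
  shows
    "(\<gamma> e e = -1 \<longrightarrow> (\<forall>x\<in>Y. \<zeta> x x = 1))
     \<and> (\<forall>x\<in>Y. \<forall>v. (\<lambda>y. \<zeta> y v) differentiable (at x))
     \<and> (\<forall>x\<in>Y. \<forall>u v. flatD \<zeta> x u v = flatD \<zeta> x v u)
     \<and> (\<exists>U. open U \<and> e \<in> U \<and>
          (\<forall>V. open V \<and> e \<in> V \<and> V \<subseteq> U \<longrightarrow>
             (\<forall>g \<in> gen_group (Pop jm ` V).
                 g ` Y \<subseteq> Y \<and> (\<forall>x\<in>Y. \<forall>u. \<zeta> (g x) (g u) = \<zeta> x u))))
     \<and> (\<forall>x\<in>Y. dim (\<Delta> x) = CARD('n) - 1)
     \<and> (\<forall>X Z. (\<forall>x\<in>Y. X differentiable (at x) \<and> Z differentiable (at x)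
                      \<and> X x \<in> \<Delta> x \<and> Z x \<in> \<Delta> x)
             \<longrightarrow> (\<forall>x\<in>Y. frechet_derivative Z (at x) (X x)
                          - frechet_derivative X (at x) (Z x) \<in> \<Delta> x))
     \<and> (\<forall>x\<in>Y. nondegenerate_form (flatD \<zeta> x))
     \<and> (\<forall>w\<in>\<Gamma>. \<forall>x\<in>Y. \<zeta> x (jm x w) = 0)
     \<and> (\<forall>x\<in>Y. jinverse jm x \<in> Y \<and> jinverse jm differentiable (at x)
          \<and> frechet_derivative (jinverse jm) (at x) ` \<Delta> x = \<Delta> (jinverse jm x)
          \<and> (\<forall>u v. flatD \<zeta> (jinverse jm x)
                      (frechet_derivative (jinverse jm) (at x) u)
                      (frechet_derivative (jinverse jm) (at x) v)
                    = flatD \<zeta> x u v))"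
proof -
  interpret jordan_trace_algebra jm e \<gamma>
    using jordan unit trace nondeg by unfold_locales auto
  have Y: "Y = unit_component" and inv: "\<And>x. x \<in> Y \<Longrightarrow> jinvertible jm x"
    unfolding Y_def unit_component_def using connected_component_subset by auto
  show ?thesis
    unfolding \<zeta>_def \<Delta>_def \<Gamma>_def
  proof (intro conjI impI ballI allI)
    show "\<exists>U. open U \<and> e \<in> U \<and> (\<forall>V. open V \<and> e \<in> V \<and> V \<subseteq> U \<longrightarrow> (\<forall>g\<in>gen_group (Pop jm ` V).
        g ` Y \<subseteq> Y \<and> (\<forall>x\<in>Y. \<forall>u. zeta jm \<gamma> (g x) (g u) = zeta jm \<gamma> x u)))"
      using unit_in_interior_exp_unit zeta_automorphism_gen_group interior_subset
      unfolding Y zeta_automorphism_def by (intro exI[of _ "interior (range exp_unit)"]) blast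
    show "frechet_derivative Z (at x) (X x) - frechet_derivative X (at x) (Z x) \<in> {u. zeta jm \<gamma> x u = 0}"
      if "\<forall>x\<in>Y. X differentiable at x \<and> Z differentiable at x \<and> X x \<in> {u. zeta jm \<gamma> x u = 0}
            \<and> Z x \<in> {u. zeta jm \<gamma> x u = 0}" and "x \<in> Y" for X Z x
      using that zeta_kernel_involutive[OF open_unit_component, of x X Z] inv unfolding Y by auto
    show "(\<lambda>y. zeta jm \<gamma> y v) differentiable at x" if "x \<in> Y" for x v
      using has_derivative_zeta[OF inv[OF that]] by (auto simp: differentiable_def)
    show "jinverse jm differentiable at x" if "x \<in> Y" for x
      using has_derivative_jinverse[OF inv[OF that]] by (auto simp: differentiable_def)
  qed (use inv zeta_position zeta_mult flatD_zeta_commute dim_zeta_kernel nondegenerate_flatD_zeta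
      jinverse_mem_unit_component frechet_derivative_jinverse P_jinverse_zeta_kernel flatD_zeta_jinverse
      in \<open>auto simp: Y\<close>)
qed

end
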